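(* For $A \in \mathbf{DLat}$ and any regular cardinal $\kappa$, (1) $A\in\kappa\mathbf{H}$ if and only if $\mathrm{p}\mathcal{H} A \subseteq \mathcal{BL}_\kappa A$; (2) $A\in\mathbf{pro}\kappa\mathbf{H}$ if and only if $\mathrm{p}\mathcal{H} A \subseteq \mathcal{BL}_\kappa A \cap \mathcal{DM} A$.
   Context: $\mathbf{DLat}$ is the class of bounded distributive lattices. For $A\in\mathbf{DLat}$: $\mathcal{DM} A$ is the Dedekind-MacNeille completion (normal ideals $N=N^{u\ell}$); a join $\bigvee S$ existing in $A$ is distributive if $a\wedge\bigvee S=\bigvee\{a\wedge s: s\in S\}$ for all $a\in A$; $\mathcal{BL} A$ (the Bruns-Lakser completion) is the frame of D-ideals of $A$ (downsets closed under distributive joins of their subsets); $A$ is identified with its principal downsets, so $A\subseteq\mathcal{DM} A\subseteq\mathcal{BL} A$. For a regular cardinal $\kappa$, a $\kappa$-frame is a lattice in which all joins of sets of cardinality $<\kappa$ exist and are distributive, and $\mathcal{BL}_\kappa A$ is the sub-$\kappa$-frame of $\mathcal{BL} A$ generated by $A$. A relative annihilator is $\langle a,b\rangle=\{x\in A: a\wedge x\le b\}$, and $\mathcal{R} A$ is the set of relative annihilators. The proHeyting extension $\mathrm{p}\mathcal{H} A$ is the bounded sublattice of $\mathcal{BL} A$ generated by $\mathcal{R} A$. $A\in\kappa\mathbf{H}$ means $\mathcal{R} A\subseteq\mathcal{BL}_\kappa A$; $A\in\mathbf{pro}\kappa\mathbf{H}$ means $\mathcal{R} A\subseteq\mathcal{BL}_\kappa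 A\cap\mathcal{DM} A$. $A$ is proHeyting if $\mathcal{R} A\subseteq\mathcal{DM} A$, equivalently $\mathcal{DM} A=\mathcal{BL} A$. *)

theory Defs
  imports Main
begin

text \<open>A bounded distributive lattice A is modelled as a type of class
  distrib_lattice and bounded_lattice. Subsets of A are downsets etc.;
  A is identified with its principal downsets.\<close>

definition is_lub :: "'a::order set \<Rightarrow> 'a \<Rightarrow> bool" where
  "is_lub S j \<longleftrightarrow> (\<forall>s\<in>S. s \<le> j) \<and> (\<forall>u. (\<forall>s\<in>S. s \<le> u) \<longrightarrow> j \<le> u)"

definition dist_join :: "'a::distrib_lattice set \<Rightarrow> 'a \<Rightarrow> bool" where
  "dist_join S j \<longleftrightarrow> is_lub S j \<and> (\<forall>a. is_lub ((\<lambda>s. inf a s) ` S) (inf a j))"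

definition principal :: "'a::order \<Rightarrow> 'a set" where
  "principal a = {x. x \<le> a}"

definition D_ideal :: "'a::distrib_lattice set \<Rightarrow> bool" where
  "D_ideal I \<longleftrightarrow> (\<forall>x y. x \<in> I \<longrightarrow> y \<le> x \<longrightarrow> y \<in> I)
      \<and> (\<forall>S j. S \<subseteq> I \<longrightarrow> dist_join S j \<longrightarrow> j \<in> I)"

definition BL :: "'a::{distrib_lattice,bounded_lattice} set set" where
  "BL = {I. D_ideal I}"

definition BL_join :: "'a::{distrib_lattice,bounded_lattice} set set \<Rightarrow> 'a set" where
  "BL_join F = \<Inter>{I. D_ideal I \<and> \<Union>F \<subseteq> I}"

definition upper_bds :: "'a::order set \<Rightarrow> 'a set" where
  "upper_bds N = {u. \<forall>x\<in>N. x \<le> u}"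

definition lower_bds :: "'a::order set \<Rightarrow> 'a set" where
  "lower_bds U = {l. \<forall>u\<in>U. l \<le> u}"

definition DM :: "'a::{distrib_lattice,bounded_lattice} set set" where
  "DM = {N. N = lower_bds (upper_bds N)}"

inductive_set BL_kappa :: "'b rel \<Rightarrow> 'a::{distrib_lattice,bounded_lattice} set set"
  for \<kappa> :: "'b rel" where
  gen: "principal a \<in> BL_kappa \<kappa>"
| top: "UNIV \<in> BL_kappa \<kappa>"
| meet: "I \<in> BL_kappa \<kappa> \<Longrightarrow> J \<in> BL_kappa \<kappa> \<Longrightarrow> I \<inter> J \<in> BL_kappa \<kappa>"
| join: "(\<forall>I\<in>F. I \<in> BL_kappa \<kappa>) \<Longrightarrow> (card_of F, \<kappa>) \<in> ordLess \<Longrightarrow> BL_join F \<in> BL_kappa \<kappa>"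

definition rel_ann :: "'a::{distrib_lattice,bounded_lattice} \<Rightarrow> 'a \<Rightarrow> 'a set" where
  "rel_ann a b = {x. inf a x \<le> b}"

definition RA :: "'a::{distrib_lattice,bounded_lattice} set set" where
  "RA = {rel_ann a b | a b. True}"

inductive_set pH :: "'a::{distrib_lattice,bounded_lattice} set set" where
  gen: "R \<in> RA \<Longrightarrow> R \<in> pH"
| top: "UNIV \<in> pH"
| bot: "BL_join {} \<in> pH"
| meet: "I \<in> pH \<Longrightarrow> J \<in> pH \<Longrightarrow> I \<inter> J \<in> pH"
| join: "I \<in> pH \<Longrightarrow> J \<in> pH \<Longrightarrow> BL_join {I, J} \<in> pH"

definition kappaH :: "'b rel \<Rightarrow> 'a::{distrib_lattice,bounded_lattice} itself \<Rightarrow> bool" where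
  "kappaH \<kappa> _ \<longleftrightarrow> (RA :: 'a set set) \<subseteq> BL_kappa \<kappa>"

definition pro_kappaH :: "'b rel \<Rightarrow> 'a::{distrib_lattice,bounded_lattice} itself \<Rightarrow> bool" where
  "pro_kappaH \<kappa> _ \<longleftrightarrow> (RA :: 'a set set) \<subseteq> BL_kappa \<kappa> \<inter> DM"

end

theory Submission
  imports Defs
begin

text \<open>Part (1): pH A is generated from RA A by finite meets and joins only, so it lies in every
  sub-\<kappa>-frame of BL A containing RA A, for infinite \<kappa>; conversely RA A \<subseteq> pH A.
  Part (2) then reduces to the fact that A is proHeyting as soon as RA A \<subseteq> DM A, i.e. that
  every D-ideal I is then normal: an element x of I^{ul} is the distributive join of the
  meets x \<sqinter> i for i \<in> I, because any bound a \<sqinter> x \<sqinter> i \<le> u for all i \<in> I says that I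
  lies in the normal ideal \<langle>a \<sqinter> x, u\<rangle>, which therefore also contains x.\<close>

lemma card_of_finite_ordLess_Cinfinite:
  assumes "finite F" and "Cinfinite \<kappa>"
  shows "(card_of F, \<kappa>) \<in> ordLess"
  using Cfinite_ordLess_Cinfinite[of "card_of F" \<kappa>] assms
  by (auto simp: cfinite_def card_of_card_order_on Field_card_of)

lemma BL_kappa_BL_join_finite:
  assumes "finite F" and "Cinfinite \<kappa>" and "F \<subseteq> BL_kappa \<kappa>"
  shows "BL_join F \<in> BL_kappa \<kappa>"
  using assms by (intro BL_kappa.join card_of_finite_ordLess_Cinfinite) auto

lemma rel_ann_in_RA: "rel_ann a b \<in> RA"
  unfolding RA_def by blast

lemma RA_subset_pH: "RA \<subseteq> pH"
  by (auto intro: pH.gen)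

lemma pH_subset_BL_kappa:
  assumes "Cinfinite \<kappa>" and "(RA :: 'a::{distrib_lattice,bounded_lattice} set set) \<subseteq> BL_kappa \<kappa>"
  shows "(pH :: 'a set set) \<subseteq> BL_kappa \<kappa>"
proof
  fix I :: "'a set"
  assume "I \<in> pH"
  then show "I \<in> BL_kappa \<kappa>"
  proof induction
    case (gen R)
    then show ?case using assms(2) by blast
  next
    case top
    show ?case by (rule BL_kappa.top)
  next
    case bot
    show ?case using assms(1) by (intro BL_kappa_BL_join_finite) auto
  next
    case (meet I J)
    from meet.IH show ?case by (rule BL_kappa.meet)
  next
    case (join I J)
    then show ?case using assms(1) by (intro BL_kappa_BL_join_finite) auto
  qed
qed

lemma D_idealI:
  assumes "\<And>x y. x \<in> I \<Longrightarrow> y \<le> x \<Longrightarrow> y \<in> I"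
    and "\<And>S j. S \<subseteq> I \<Longrightarrow> dist_join S j \<Longrightarrow> j \<in> I"
  shows "D_ideal I"
  using assms unfolding D_ideal_def by blast

lemma D_ideal_downward: "D_ideal I \<Longrightarrow> x \<in> I \<Longrightarrow> y \<le> x \<Longrightarrow> y \<in> I"
  unfolding D_ideal_def by blast

lemma D_ideal_dist_join: "D_ideal I \<Longrightarrow> S \<subseteq> I \<Longrightarrow> dist_join S j \<Longrightarrow> j \<in> I"
  unfolding D_ideal_def by blast

lemma D_ideal_Inter: "(\<And>I. I \<in> F \<Longrightarrow> D_ideal I) \<Longrightarrow> D_ideal (\<Inter>F)"
  by (rule D_idealI) (blast dest: D_ideal_downward D_ideal_dist_join)+

lemma D_ideal_Int: "D_ideal I \<Longrightarrow> D_ideal J \<Longrightarrow> D_ideal (I \<inter> J)"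
  using D_ideal_Inter[of "{I, J}"] by auto

lemma D_ideal_UNIV: "D_ideal UNIV"
  using D_ideal_Inter[of "{}"] by simp

lemma D_ideal_BL_join: "D_ideal (BL_join F)"
  unfolding BL_join_def by (rule D_ideal_Inter) blast

lemma is_lubI:
  assumes "\<And>s. s \<in> S \<Longrightarrow> s \<le> j" and "\<And>u. (\<And>s. s \<in> S \<Longrightarrow> s \<le> u) \<Longrightarrow> j \<le> u"
  shows "is_lub S j"
  using assms unfolding is_lub_def by blast

lemma is_lub_least: "is_lub S j \<Longrightarrow> (\<And>s. s \<in> S \<Longrightarrow> s \<le> u) \<Longrightarrow> j \<le> u"
  unfolding is_lub_def by blast

lemma D_ideal_rel_ann: "D_ideal (rel_ann a b)"
proof (rule D_idealI)
  fix x y :: 'a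
  assume "x \<in> rel_ann a b" and "y \<le> x"
  then show "y \<in> rel_ann a b"
    unfolding rel_ann_def by (auto intro: order_trans inf_mono)
next
  fix S j
  assume "S \<subseteq> rel_ann a b" and "dist_join S j"
  then have "inf a j \<le> b"
    unfolding dist_join_def rel_ann_def by (auto intro: is_lub_least)
  then show "j \<in> rel_ann a b"
    unfolding rel_ann_def by simp
qed

lemma pH_subset_BL: "pH \<subseteq> BL"
proof
  fix I :: "'a set"
  assume "I \<in> pH"
  then have "D_ideal I"
    by induction (auto simp: RA_def D_ideal_rel_ann D_ideal_UNIV D_ideal_BL_join D_ideal_Int)
  then show "I \<in> BL"
    unfolding BL_def by simp
qed

lemma subset_lower_bds_upper_bds: "I \<subseteq> lower_bds (upper_bds I)"
  unfolding lower_bds_def upper_bds_def by blast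

lemma lower_bds_upper_bds_subset_DM:
  assumes "N \<in> DM" and "I \<subseteq> N"
  shows "lower_bds (upper_bds I) \<subseteq> N"
proof -
  have "lower_bds (upper_bds I) \<subseteq> lower_bds (upper_bds N)"
    using \<open>I \<subseteq> N\<close> unfolding lower_bds_def upper_bds_def by blast
  then show ?thesis
    using \<open>N \<in> DM\<close> unfolding DM_def by blast
qed

lemma is_lub_inf_image_if_RA_subset_DM:
  fixes x a :: "'a::{distrib_lattice,bounded_lattice}"
  assumes "(RA :: 'a set set) \<subseteq> DM" and "x \<in> lower_bds (upper_bds I)"
  shows "is_lub ((\<lambda>i. inf a (inf x i)) ` I) (inf a x)"
proof (rule is_lubI)
  fix s assume "s \<in> (\<lambda>i. inf a (inf x i)) ` I"
  then show "s \<le> inf a x"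
    by (blast intro: inf_mono inf_le1)
next
  fix u assume bound: "\<And>s. s \<in> (\<lambda>i. inf a (inf x i)) ` I \<Longrightarrow> s \<le> u"
  have "I \<subseteq> rel_ann (inf a x) u"
    using bound unfolding rel_ann_def by (auto simp: inf_assoc)
  then have "x \<in> rel_ann (inf a x) u"
    using assms lower_bds_upper_bds_subset_DM[OF _ \<open>I \<subseteq> rel_ann (inf a x) u\<close>]
    by (blast intro: rel_ann_in_RA)
  then show "inf a x \<le> u"
    unfolding rel_ann_def by (simp add: inf_assoc)
qed

lemma BL_subset_DM_if_RA_subset_DM:
  assumes "(RA :: 'a::{distrib_lattice,bounded_lattice} set set) \<subseteq> DM"
  shows "(BL :: 'a set set) \<subseteq> DM"
proof
  fix I :: "'a set"
  assume "I \<in> BL"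
  then have I: "D_ideal I"
    unfolding BL_def by simp
  have "x \<in> I" if x: "x \<in> lower_bds (upper_bds I)" for x
  proof -
    have dist: "is_lub (inf a ` inf x ` I) (inf a x)" for a
      using is_lub_inf_image_if_RA_subset_DM[OF assms x] by (simp add: image_image)
    have "is_lub (inf x ` I) x"
      using dist[of top] by (simp add: image_image)
    with dist have "dist_join (inf x ` I) x"
      unfolding dist_join_def by blast
    moreover have "inf x ` I \<subseteq> I"
      using I by (auto intro: D_ideal_downward)
    ultimately show "x \<in> I"
      using I by (blast intro: D_ideal_dist_join)
  qed
  then have "I = lower_bds (upper_bds I)"
    using subset_lower_bds_upper_bds by blast
  then show "I \<in> DM"
    unfolding DM_def by simp
qed

theorem theorem4p23:
  fixes \<kappa> :: "'b rel"
  assumes "Cinfinite \<kappa>" and "regularCard \<kappa>"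
  shows "(kappaH \<kappa> TYPE('a::{distrib_lattice,bounded_lattice})
            \<longleftrightarrow> (pH :: 'a set set) \<subseteq> BL_kappa \<kappa>)
       \<and> (pro_kappaH \<kappa> TYPE('a)
            \<longleftrightarrow> (pH :: 'a set set) \<subseteq> BL_kappa \<kappa> \<inter> DM)"
proof -
  have kappaH: "(RA :: 'a set set) \<subseteq> BL_kappa \<kappa> \<longleftrightarrow> (pH :: 'a set set) \<subseteq> BL_kappa \<kappa>"
    using pH_subset_BL_kappa[OF assms(1)] RA_subset_pH by blast
  have "(RA :: 'a set set) \<subseteq> DM \<Longrightarrow> (pH :: 'a set set) \<subseteq> DM"
    using pH_subset_BL BL_subset_DM_if_RA_subset_DM by blast
  then have "(RA :: 'a set set) \<subseteq> BL_kappa \<kappa> \<inter> DM \<longleftrightarrow> (pH :: 'a set set) \<subseteq> BL_kappa \<kappa> \<inter> DM"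
    using kappaH RA_subset_pH by blast
  with kappaH show ?thesis
    unfolding kappaH_def pro_kappaH_def by blast
qed

end
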